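(* Let $G=(V,E)$ be a finite simple graph. If the graphic matroid of $G$ has a rainbow circuit-free coloring in which each color is used at most twice, then $G$ is $(2,3)$-sparse.
   Context: The graphic matroid of $G$ has ground set $E$, independent sets being the edge sets of forests; its circuits are the edge sets of cycles. A coloring of $E$ is a partition into nonempty color classes; it is rainbow circuit-free if no cycle of $G$ has all its edges of pairwise different colors. $G$ is $(2,3)$-sparse if $|E[X]|\leq 2|X|-3$ for every $X\subseteq V$ with $|X|\geq 2$, where $E[X]$ is the set of edges with both endpoints in $X$. *)

theory Defs
  imports Main "HOL-Library.Disjoint_Sets"
begin

definition simple_graph :: "'a set \<Rightarrow> 'a set set \<Rightarrow> bool" where
  "simple_graph V E \<longleftrightarrow> finite V \<and>
     (\<forall>e\<in>E. \<exists>u v. u \<noteq> v \<and> u \<in> V \<and> v \<in> V \<and> e = {u, v})"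

definition is_cycle :: "'a set set \<Rightarrow> 'a list \<Rightarrow> bool" where
  "is_cycle E vs \<longleftrightarrow> length vs \<ge> 3 \<and> distinct vs \<and>
     (\<forall>i < length vs. {vs ! i, vs ! ((i + 1) mod length vs)} \<in> E)"

definition cycle_edges :: "'a list \<Rightarrow> 'a set set" where
  "cycle_edges vs = {{vs ! i, vs ! ((i + 1) mod length vs)} | i. i < length vs}"

definition graphic_circuit :: "'a set set \<Rightarrow> 'a set set \<Rightarrow> bool" where
  "graphic_circuit E C \<longleftrightarrow> (\<exists>vs. is_cycle E vs \<and> C = cycle_edges vs)"

text \<open>A coloring is a partition P of E into nonempty color classes. It is rainbow
  circuit-free if no circuit has all its edges of pairwise different colors.\<close>
definition rainbow_circuit_free :: "'a set set \<Rightarrow> 'a set set set \<Rightarrow> bool" where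
  "rainbow_circuit_free E P \<longleftrightarrow>
     \<not> (\<exists>C. graphic_circuit E C \<and> (\<forall>X\<in>P. card (C \<inter> X) \<le> 1))"

definition sparse23 :: "'a set \<Rightarrow> 'a set set \<Rightarrow> bool" where
  "sparse23 V E \<longleftrightarrow> (\<forall>X. X \<subseteq> V \<and> card X \<ge> 2 \<longrightarrow>
     card {e\<in>E. e \<subseteq> X} \<le> 2 * card X - 3)"

end

theory Submission
  imports Defs
begin

text \<open>Suppose some vertex set \<open>X\<close>, \<open>|X| \<ge> 2\<close>, spans at least \<open>2|X| - 2\<close> edges, and let \<open>Q\<close> be
  the colour classes meeting them. Picking one edge of each class in \<open>Q\<close> gives a rainbow edge set,
  hence a forest on \<open>X\<close>, so \<open>|Q| < |X|\<close>. Since classes have at most two edges, \<open>|Q| = |X| - 1\<close>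
  and every class in \<open>Q\<close> consists of two edges inside \<open>X\<close>. The same bound for \<open>X - {v}\<close> shows
  that for each vertex \<open>v\<close> some class in \<open>Q\<close> has both its edges at \<open>v\<close>. Two distinct edges
  of a simple graph share at most one vertex, so this assigns distinct classes to distinct
  vertices, and \<open>|X| \<le> |Q| = |X| - 1\<close>, a contradiction.\<close>

abbreviation induced_edges :: "'a set set \<Rightarrow> 'a set \<Rightarrow> 'a set set" where
  "induced_edges E X \<equiv> {e\<in>E. e \<subseteq> X}"

lemma simple_graph_edgeE:
  assumes "simple_graph Y S" "e \<in> S"
  obtains u v where "u \<noteq> v" "u \<in> Y" "v \<in> Y" "e = {u, v}"
  using assms unfolding simple_graph_def by blast

lemma simple_graph_edge_subset: "simple_graph Y S \<Longrightarrow> e \<in> S \<Longrightarrow> e \<subseteq> Y"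
  by (erule simple_graph_edgeE) auto

lemma simple_graph_finite_edges:
  assumes "simple_graph Y S"
  shows "finite S"
proof (rule finite_subset)
  show "S \<subseteq> Pow Y" using simple_graph_edgeE[OF assms] by blast
  show "finite (Pow Y)" using assms unfolding simple_graph_def by simp
qed

lemma simple_graph_subset: "simple_graph Y S \<Longrightarrow> T \<subseteq> S \<Longrightarrow> simple_graph Y T"
  unfolding simple_graph_def by blast

lemma simple_graph_induced:
  assumes "simple_graph V E" "X \<subseteq> V"
  shows "simple_graph X (induced_edges E X)"
  unfolding simple_graph_def
proof (intro conjI ballI)
  show "finite X" using assms finite_subset unfolding simple_graph_def by blast
  fix e assume e: "e \<in> induced_edges E X"
  then obtain u v where "u \<noteq> v" "e = {u, v}" using simple_graph_edgeE[OF assms(1)] by blast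
  then show "\<exists>u v. u \<noteq> v \<and> u \<in> X \<and> v \<in> X \<and> e = {u, v}" using e by blast
qed

lemma simple_graph_edge_ends:
  assumes "simple_graph Y S" "{x, a} \<in> S"
  shows "x \<noteq> a" "x \<in> Y" "a \<in> Y"
proof -
  obtain u v where "u \<noteq> v" "u \<in> Y" "v \<in> Y" "{x, a} = {u, v}"
    by (rule simple_graph_edgeE[OF assms])
  then show "x \<noteq> a" "x \<in> Y" "a \<in> Y" by (auto simp: doubleton_eq_iff)
qed

lemma simple_graph_edge_at:
  assumes "simple_graph Y S" "e \<in> S" "y \<in> e"
  obtains a where "a \<in> Y" "a \<noteq> y" "e = {y, a}"
proof -
  obtain u v where uv: "u \<noteq> v" "u \<in> Y" "v \<in> Y" "e = {u, v}"
    by (rule simple_graph_edgeE[OF assms(1,2)])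
  show thesis
  proof (cases "y = u")
    case True
    then show thesis using that[of v] uv by simp
  next
    case False
    then show thesis using that[of u] uv assms(3) by (simp add: insert_commute)
  qed
qed

lemma simple_graph_edge_eq:
  assumes "simple_graph Y S" "e \<in> S" "v \<in> e" "w \<in> e" "v \<noteq> w"
  shows "e = {v, w}"
proof -
  obtain u u' where "e = {u, u'}" by (rule simple_graph_edgeE[OF assms(1,2)])
  then show ?thesis using assms(3-5) by auto
qed

definition is_path :: "'a set set \<Rightarrow> 'a list \<Rightarrow> bool" where
  "is_path S ps \<longleftrightarrow> distinct ps \<and> (\<forall>i. Suc i < length ps \<longrightarrow> {ps ! i, ps ! Suc i} \<in> S)"

lemma is_cycle_mono: "is_cycle S vs \<Longrightarrow> S \<subseteq> T \<Longrightarrow> is_cycle T vs"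
  unfolding is_cycle_def by blast

lemma is_cycle_take_path:
  assumes path: "is_path S ps" and j: "2 \<le> j" "j < length ps" and closing: "{ps ! j, ps ! 0} \<in> S"
  shows "is_cycle S (take (Suc j) ps)"
  unfolding is_cycle_def
proof (intro conjI allI impI)
  let ?vs = "take (Suc j) ps"
  have len: "length ?vs = Suc j" using j by simp
  then show "3 \<le> length ?vs" using j by simp
  show "distinct ?vs" using path unfolding is_path_def by simp
  fix i assume "i < length ?vs"
  then consider "i < j" | "i = j" using len by linarith
  then show "{?vs ! i, ?vs ! ((i + 1) mod length ?vs)} \<in> S"
  proof cases
    case 1
    then show ?thesis using path j len unfolding is_path_def by simp
  next
    case 2
    then show ?thesis using closing len by simp
  qed
qed

lemma longest_path_exists:
  assumes "finite Y" "y \<in> Y"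
  obtains ps where "is_path S ps" "set ps \<subseteq> Y" "ps \<noteq> []"
    "\<And>qs. is_path S qs \<Longrightarrow> set qs \<subseteq> Y \<Longrightarrow> length qs \<le> length ps"
proof -
  let ?path = "\<lambda>ps. is_path S ps \<and> set ps \<subseteq> Y"
  have "?path [y]" using assms unfolding is_path_def by simp
  moreover have "length qs < Suc (card Y)" if "?path qs" for qs
    using that assms(1) unfolding is_path_def by (metis card_mono distinct_card le_imp_less_Suc)
  ultimately obtain ps where "?path ps" "\<And>qs. ?path qs \<Longrightarrow> length qs \<le> length ps"
    using ex_has_greatest_nat[of ?path "[y]" length "Suc (card Y)"] by blast
  moreover from this have "ps \<noteq> []" using \<open>?path [y]\<close> by fastforce
  ultimately show thesis using that by blast
qed

lemma longest_path_head_neighbour: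
  assumes G: "simple_graph Y S" and path: "is_path S ps" "set ps \<subseteq> Y" "ps \<noteq> []"
    and longest: "\<And>qs. is_path S qs \<Longrightarrow> set qs \<subseteq> Y \<Longrightarrow> length qs \<le> length ps"
    and edge: "{ps ! 0, c} \<in> S"
  shows "c \<in> set ps"
proof (rule ccontr)
  assume c: "c \<notin> set ps"
  have "c \<in> Y" using simple_graph_edge_ends[OF G edge] by simp
  have "is_path S (c # ps)"
    unfolding is_path_def
  proof (intro conjI allI impI)
    show "distinct (c # ps)" using path c unfolding is_path_def by simp
    fix i assume "Suc i < length (c # ps)"
    then show "{(c # ps) ! i, (c # ps) ! Suc i} \<in> S"
      using path edge unfolding is_path_def by (cases i) (auto simp: insert_commute)
  qed
  then have "length (c # ps) \<le> length ps" using longest[of "c # ps"] path(2) \<open>c \<in> Y\<close> by simp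
  then show False by simp
qed

lemma cycle_if_two_neighbours:
  assumes G: "simple_graph Y S" and "Y \<noteq> {}"
    and deg: "\<forall>x\<in>Y. \<exists>a b. a \<noteq> b \<and> {x, a} \<in> S \<and> {x, b} \<in> S"
  shows "\<exists>vs. is_cycle S vs"
proof -
  obtain y where "y \<in> Y" using \<open>Y \<noteq> {}\<close> by blast
  moreover have "finite Y" using G unfolding simple_graph_def by simp
  ultimately obtain ps where path: "is_path S ps" "set ps \<subseteq> Y" "ps \<noteq> []"
    and longest: "\<And>qs. is_path S qs \<Longrightarrow> set qs \<subseteq> Y \<Longrightarrow> length qs \<le> length ps"
    using longest_path_exists by metis
  have "ps ! 0 \<in> Y" using path by (simp add: subset_iff)
  then obtain a b where ab: "a \<noteq> b" "{ps ! 0, a} \<in> S" "{ps ! 0, b} \<in> S" using deg by blast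
  have "a \<noteq> ps ! 0" "b \<noteq> ps ! 0"
    using simple_graph_edge_ends(1)[OF G] ab by metis+
  obtain ia where ia: "ia < length ps" "ps ! ia = a"
    using longest_path_head_neighbour[OF G path longest ab(2)] by (meson in_set_conv_nth)
  obtain ib where ib: "ib < length ps" "ps ! ib = b"
    using longest_path_head_neighbour[OF G path longest ab(3)] by (meson in_set_conv_nth)
  define j where "j = max ia ib"
  have "ia \<noteq> 0" using \<open>a \<noteq> ps ! 0\<close> ia(2) by (intro notI) simp
  moreover have "ib \<noteq> 0" using \<open>b \<noteq> ps ! 0\<close> ib(2) by (intro notI) simp
  moreover have "ia \<noteq> ib" using ab(1) ia(2) ib(2) by (intro notI) simp
  ultimately have "2 \<le> j" "j < length ps" using ia(1) ib(1) unfolding j_def by auto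
  moreover have "{ps ! j, ps ! 0} \<in> S"
    using ab ia ib unfolding j_def by (cases "ia \<le> ib") (simp_all add: max_def insert_commute)
  ultimately show ?thesis using is_cycle_take_path[OF path(1)] by blast
qed

lemma card_edges_at_leaf:
  assumes G: "simple_graph Y S" and leaf: "\<And>a b. {y, a} \<in> S \<Longrightarrow> {y, b} \<in> S \<Longrightarrow> a = b"
  shows "card {e\<in>S. y \<in> e} \<le> 1"
proof -
  have "e = e'" if e: "e \<in> S" "y \<in> e" and e': "e' \<in> S" "y \<in> e'" for e e'
  proof -
    obtain a where "e = {y, a}" using simple_graph_edge_at[OF G e] by blast
    moreover obtain b where "e' = {y, b}" using simple_graph_edge_at[OF G e'] by blast
    ultimately show ?thesis using leaf[of a b] e(1) e'(1) by simp
  qed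
  moreover have "finite {e\<in>S. y \<in> e}" using simple_graph_finite_edges[OF G] by simp
  ultimately show ?thesis
    using card_le_Suc0_iff_eq by (metis (no_types, lifting) One_nat_def mem_Collect_eq)
qed

lemma card_edges_less_if_acyclic:
  assumes "simple_graph Y S" "Y \<noteq> {}" "\<And>vs. \<not> is_cycle S vs"
  shows "card S < card Y"
  using assms
proof (induction "card Y" arbitrary: Y S rule: less_induct)
  case less
  have "\<not> (\<forall>x\<in>Y. \<exists>a b. a \<noteq> b \<and> {x, a} \<in> S \<and> {x, b} \<in> S)"
    using cycle_if_two_neighbours less.prems by blast
  then obtain y where y: "y \<in> Y" and leaf: "\<And>a b. {y, a} \<in> S \<Longrightarrow> {y, b} \<in> S \<Longrightarrow> a = b"
    by blast
  have finY: "finite Y" using less.prems(1) unfolding simple_graph_def by simp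
  show ?case
  proof (cases "Y - {y} = {}")
    case True
    have "S = {}"
    proof (rule equals0I)
      fix e assume "e \<in> S"
      then obtain u v where "u \<noteq> v" "u \<in> Y" "v \<in> Y"
        using simple_graph_edgeE[OF less.prems(1)] by metis
      then show False using True by blast
    qed
    then show ?thesis using y finY by (auto simp: card_gt_0_iff)
  next
    case False
    let ?S' = "induced_edges S (Y - {y})"
    have G': "simple_graph (Y - {y}) ?S'"
      using simple_graph_induced[OF less.prems(1)] by blast
    have "\<not> is_cycle ?S' vs" for vs
      using less.prems(3) is_cycle_mono[of ?S' vs S] by blast
    then have "card ?S' < card (Y - {y})"
      using less.hyps[OF card_Diff1_less[OF finY y] G' False] by blast
    moreover have "S = ?S' \<union> {e\<in>S. y \<in> e}" using simple_graph_edge_subset[OF less.prems(1)] by blast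
    then have "card S \<le> card ?S' + card {e\<in>S. y \<in> e}" by (metis card_Un_le)
    moreover have "card {e\<in>S. y \<in> e} \<le> 1" using less.prems(1) leaf by (rule card_edges_at_leaf)
    moreover have "card (Y - {y}) = card Y - 1" using finY y by simp
    ultimately show ?thesis by linarith
  qed
qed

abbreviation classes_meeting :: "'a set set \<Rightarrow> 'a set \<Rightarrow> 'a set set" where
  "classes_meeting P F \<equiv> {C\<in>P. C \<inter> F \<noteq> {}}"

lemma finite_classes_meeting: "partition_on E P \<Longrightarrow> finite E \<Longrightarrow> finite (classes_meeting P F)"
  using finite_elements by (rule finite_subset[OF Collect_subset])

lemma partition_on_same_class:
  assumes "partition_on E P" "C \<in> P" "D \<in> P" "x \<in> C" "x \<in> D"
  shows "C = D"
  using partition_onD2[OF assms(1)] assms(2-5) disjointD by blast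

lemma partition_on_transversal:
  assumes P: "partition_on E P" and "Q \<subseteq> P" and meets: "\<forall>C\<in>Q. C \<inter> Z \<noteq> {}"
  obtains S where "S \<subseteq> Z" "card S = card Q" "\<forall>C\<in>P. card (S \<inter> C) \<le> 1"
proof -
  define f where "f C = (SOME e. e \<in> C \<inter> Z)" for C
  have f: "f C \<in> C \<inter> Z" if "C \<in> Q" for C
    using meets that unfolding f_def by (metis some_in_eq)
  have same: "C = D" if "C \<in> Q" "D \<in> P" "f C \<in> D" for C D
  proof (rule partition_on_same_class[OF P _ \<open>D \<in> P\<close> _ \<open>f C \<in> D\<close>])
    show "C \<in> P" "f C \<in> C" using f \<open>C \<in> Q\<close> \<open>Q \<subseteq> P\<close> by auto
  qed
  have "f ` Q \<subseteq> Z" using f by blast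
  moreover have "inj_on f Q"
  proof (rule inj_onI)
    fix C D assume "C \<in> Q" "D \<in> Q" "f C = f D"
    then have "D \<in> P" "f C \<in> D" using f[OF \<open>D \<in> Q\<close>] \<open>Q \<subseteq> P\<close> by auto
    then show "C = D" by (rule same[OF \<open>C \<in> Q\<close>])
  qed
  then have "card (f ` Q) = card Q" by (rule card_image)
  moreover have "card (f ` Q \<inter> C) \<le> 1" if "C \<in> P" for C
  proof -
    have "f ` Q \<inter> C \<subseteq> {f C}"
    proof
      fix x assume "x \<in> f ` Q \<inter> C"
      then obtain D where "D \<in> Q" "x = f D" "x \<in> C" by blast
      then have "D = C" using same[OF \<open>D \<in> Q\<close> \<open>C \<in> P\<close>] by simp
      then show "x \<in> {f C}" using \<open>x = f D\<close> by simp
    qed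
    then show ?thesis using card_mono[of "{f C}"] by simp
  qed
  ultimately show thesis using that by blast
qed

lemma rainbow_circuit_free_acyclic:
  assumes "rainbow_circuit_free E P" "S \<subseteq> E" "finite S" "\<forall>C\<in>P. card (S \<inter> C) \<le> 1"
  shows "\<not> is_cycle S vs"
proof
  assume cycle: "is_cycle S vs"
  then have sub: "cycle_edges vs \<subseteq> S" unfolding is_cycle_def cycle_edges_def by blast
  have "graphic_circuit E (cycle_edges vs)"
    unfolding graphic_circuit_def using is_cycle_mono[OF cycle \<open>S \<subseteq> E\<close>] by blast
  moreover have "card (cycle_edges vs \<inter> C) \<le> 1" if "C \<in> P" for C
    using card_mono[of "S \<inter> C" "cycle_edges vs \<inter> C"] sub assms(3,4) that by fastforce
  ultimately show False using assms(1) unfolding rainbow_circuit_free_def by blast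
qed

text \<open>Choosing one edge of each class met by \<open>Z\<close> yields a rainbow edge set, hence a forest.\<close>
lemma card_classes_meeting_less:
  assumes P: "partition_on E P" and rf: "rainbow_circuit_free E P"
    and G: "simple_graph Y Z" and "Z \<subseteq> E" "Y \<noteq> {}"
  shows "card (classes_meeting P Z) < card Y"
proof -
  obtain S where S: "S \<subseteq> Z" "card S = card (classes_meeting P Z)" "\<forall>C\<in>P. card (S \<inter> C) \<le> 1"
    using partition_on_transversal[OF P, of "classes_meeting P Z" Z] by blast
  have GS: "simple_graph Y S" using simple_graph_subset[OF G S(1)] .
  have "\<not> is_cycle S vs" for vs
    using rainbow_circuit_free_acyclic[OF rf _ simple_graph_finite_edges[OF GS] S(3)] S(1) \<open>Z \<subseteq> E\<close>
    by blast
  then have "card S < card Y" using card_edges_less_if_acyclic[OF GS \<open>Y \<noteq> {}\<close>] by blast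
  then show ?thesis using S(2) by simp
qed

lemma card_le_sum_classes_meeting:
  assumes P: "partition_on E P" and "finite E" "F \<subseteq> E"
  shows "card F \<le> (\<Sum>C\<in>classes_meeting P F. card (C \<inter> F))"
proof -
  have "finite (classes_meeting P F)" using P \<open>finite E\<close> by (rule finite_classes_meeting)
  moreover have "F = (\<Union>C\<in>classes_meeting P F. C \<inter> F)" using partition_onD1[OF P] \<open>F \<subseteq> E\<close> by blast
  ultimately show ?thesis by (metis card_UN_le)
qed

lemma card_le_twice_classes_meeting:
  assumes P: "partition_on E P" and "finite E" "F \<subseteq> E" and small: "\<forall>C\<in>P. card C \<le> 2"
  shows "card F \<le> 2 * card (classes_meeting P F)"
proof -
  have "card F \<le> (\<Sum>C\<in>classes_meeting P F. card (C \<inter> F))"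
    using card_le_sum_classes_meeting[OF assms(1-3)] .
  also have "\<dots> \<le> (\<Sum>C\<in>classes_meeting P F. card C)"
    using \<open>finite E\<close> partition_onD1[OF P] by (intro sum_mono card_mono) (auto intro: finite_subset)
  also have "\<dots> \<le> 2 * card (classes_meeting P F)"
    using sum_bounded_above[of "classes_meeting P F" card 2] small by simp
  finally show ?thesis .
qed

lemma classes_meeting_full_if_dense:
  assumes P: "partition_on E P" and "finite E" "F \<subseteq> E" and small: "\<forall>C\<in>P. card C \<le> 2"
    and dense: "2 * card (classes_meeting P F) \<le> card F"
  shows "\<forall>C\<in>classes_meeting P F. C \<subseteq> F \<and> card C = 2"
proof
  fix C assume C: "C \<in> classes_meeting P F"
  let ?Q = "classes_meeting P F"
  have finQ: "finite ?Q" using P \<open>finite E\<close> by (rule finite_classes_meeting)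
  have finD: "finite D" if "D \<in> P" for D
    using \<open>finite E\<close> partition_onD1[OF P] that by (auto intro: finite_subset)
  have inter_le: "card (D \<inter> F) \<le> card D" if "D \<in> ?Q" for D
    using finD that by (intro card_mono) auto
  have "(\<Sum>D\<in>?Q. card (D \<inter> F)) \<le> (\<Sum>D\<in>?Q. card D)" using inter_le by (rule sum_mono)
  moreover have "(\<Sum>D\<in>?Q. card D) \<le> (\<Sum>D\<in>?Q. 2)" using small by (intro sum_mono) auto
  moreover have "(\<Sum>D\<in>?Q. (2::nat)) = 2 * card ?Q" by simp
  moreover note card_le_sum_classes_meeting[OF assms(1-3)] dense
  ultimately have sum_inter: "(\<Sum>D\<in>?Q. card (D \<inter> F)) = (\<Sum>D\<in>?Q. card D)"
    and sum_card: "(\<Sum>D\<in>?Q. card D) = (\<Sum>D\<in>?Q. 2)" by linarith+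
  have "card (C \<inter> F) = card C" using sum_mono_inv[OF sum_inter inter_le C finQ] .
  then have "C \<inter> F = C" using card_subset_eq[OF finD Int_lower1] C by simp
  moreover have "card C = 2" using sum_mono_inv[OF sum_card _ C finQ] small by simp
  ultimately show "C \<subseteq> F \<and> card C = 2" by blast
qed

text \<open>Deleting \<open>v\<close> drops the number of classes met below \<open>card X - 1\<close>, so some class
  met by the edges inside \<open>X\<close> has no edge avoiding \<open>v\<close>.\<close>
lemma class_centred_at_vertex:
  assumes P: "partition_on E P" and rf: "rainbow_circuit_free E P"
    and G: "simple_graph V E" and "X \<subseteq> V" "v \<in> X" "2 \<le> card X"
    and many: "card X - 1 \<le> card (classes_meeting P (induced_edges E X))"
    and inside: "\<forall>C\<in>classes_meeting P (induced_edges E X). C \<subseteq> induced_edges E X"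
  shows "\<exists>C\<in>classes_meeting P (induced_edges E X). \<forall>e\<in>C. v \<in> e"
proof -
  let ?Q = "classes_meeting P (induced_edges E X)"
  let ?Qv = "classes_meeting P (induced_edges E (X - {v}))"
  have "finite X" using G \<open>X \<subseteq> V\<close> unfolding simple_graph_def by (blast intro: finite_subset)
  then have card_Xv: "card (X - {v}) = card X - 1" using \<open>v \<in> X\<close> by simp
  then have "card (X - {v}) \<noteq> 0" using \<open>2 \<le> card X\<close> by linarith
  then have "X - {v} \<noteq> {}" by (metis card.empty)
  moreover have "X - {v} \<subseteq> V" using \<open>X \<subseteq> V\<close> by blast
  ultimately have "card ?Qv < card (X - {v})"
    using card_classes_meeting_less[OF P rf simple_graph_induced[OF G] Collect_subset] by blast
  then have less: "card ?Qv < card ?Q" using card_Xv many by linarith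
  have "\<not> ?Q \<subseteq> ?Qv"
  proof
    assume "?Q \<subseteq> ?Qv"
    moreover have "finite ?Qv"
      using P simple_graph_finite_edges[OF G] by (rule finite_classes_meeting)
    ultimately have "card ?Q \<le> card ?Qv" by (rule card_mono[rotated])
    then show False using less by linarith
  qed
  then obtain C where C: "C \<in> ?Q" "C \<notin> ?Qv" by blast
  have "v \<in> e" if "e \<in> C" for e
  proof -
    have "e \<in> E" "e \<subseteq> X" using inside C(1) that by auto
    moreover have "e \<notin> induced_edges E (X - {v})" using C that by auto
    ultimately show ?thesis by blast
  qed
  then show ?thesis using C(1) by blast
qed

lemma card_le_if_classes_centred:
  assumes G: "simple_graph V E" and "finite Q" and two: "\<forall>C\<in>Q. C \<subseteq> E \<and> card C = 2"
    and centred: "\<forall>v\<in>X. \<exists>C\<in>Q. \<forall>e\<in>C. v \<in> e"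
  shows "card X \<le> card Q"
proof -
  obtain g where g: "\<forall>v\<in>X. g v \<in> Q \<and> (\<forall>e\<in>g v. v \<in> e)"
    using bchoice[of X "\<lambda>v C. C \<in> Q \<and> (\<forall>e\<in>C. v \<in> e)"] centred by blast
  have "inj_on g X"
  proof (rule inj_onI)
    fix v w assume "v \<in> X" "w \<in> X" "g v = g w"
    then have "g v \<in> Q" and ends: "\<forall>e\<in>g v. v \<in> e \<and> w \<in> e" using g by auto
    then obtain e e' where ee': "g v = {e, e'}" "e \<noteq> e'" using two card_2_iff by metis
    then have "e \<in> E" "e' \<in> E" using two \<open>g v \<in> Q\<close> by auto
    show "v = w"
    proof (rule ccontr)
      assume "v \<noteq> w"
      have "e = {v, w}"
        using simple_graph_edge_eq[OF G \<open>e \<in> E\<close>, of v w] ends ee'(1) \<open>v \<noteq> w\<close> by simp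
      moreover have "e' = {v, w}"
        using simple_graph_edge_eq[OF G \<open>e' \<in> E\<close>, of v w] ends ee'(1) \<open>v \<noteq> w\<close> by simp
      ultimately show False using ee'(2) by simp
    qed
  qed
  then show ?thesis using card_inj_on_le[of g X Q] g \<open>finite Q\<close> by blast
qed

lemma card_induced_edges_le:
  assumes G: "simple_graph V E" and P: "partition_on E P" and rf: "rainbow_circuit_free E P"
    and small: "\<forall>C\<in>P. card C \<le> 2" and "X \<subseteq> V" "2 \<le> card X"
  shows "card (induced_edges E X) \<le> 2 * card X - 3"
proof (rule ccontr)
  let ?F = "induced_edges E X"
  let ?Q = "classes_meeting P ?F"
  assume "\<not> card ?F \<le> 2 * card X - 3"
  then have dense: "2 * card X - 2 \<le> card ?F" by linarith
  have "finite E" using G by (rule simple_graph_finite_edges)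
  have GX: "simple_graph X ?F" using G \<open>X \<subseteq> V\<close> by (rule simple_graph_induced)
  have "X \<noteq> {}" using \<open>2 \<le> card X\<close> by (metis card.empty not_numeral_le_zero)
  then have fewer: "card ?Q < card X"
    using card_classes_meeting_less[OF P rf GX Collect_subset] by blast
  have "card ?F \<le> 2 * card ?Q"
    using card_le_twice_classes_meeting[OF P \<open>finite E\<close> Collect_subset small] .
  then have many: "card X - 1 \<le> card ?Q" using dense by linarith
  have "2 * card ?Q \<le> card ?F" using fewer dense by linarith
  then have two: "\<forall>C\<in>?Q. C \<subseteq> ?F \<and> card C = 2"
    by (rule classes_meeting_full_if_dense[OF P \<open>finite E\<close> Collect_subset small])
  then have inside: "\<forall>C\<in>?Q. C \<subseteq> ?F" by auto
  have "\<forall>v\<in>X. \<exists>C\<in>?Q. \<forall>e\<in>C. v \<in> e"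
    by (intro ballI class_centred_at_vertex[OF P rf G \<open>X \<subseteq> V\<close> _ \<open>2 \<le> card X\<close> many inside])
  moreover have "finite ?Q" using P \<open>finite E\<close> by (rule finite_classes_meeting)
  ultimately have "card X \<le> card ?Q" using card_le_if_classes_centred[OF GX _ two] by blast
  then show False using fewer by linarith
qed

theorem theorem9:
  fixes V :: "'a set" and E :: "'a set set"
  assumes "simple_graph V E"
    and "\<exists>P. partition_on E P \<and> rainbow_circuit_free E P \<and> (\<forall>X\<in>P. card X \<le> 2)"
  shows "sparse23 V E"
proof -
  obtain P where "partition_on E P" "rainbow_circuit_free E P" "\<forall>C\<in>P. card C \<le> 2"
    using assms(2) by blast
  then show ?thesis
    unfolding sparse23_def using card_induced_edges_le[OF assms(1)] by blast
qed

end
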